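(* Let $q\ge2$ be a prime power, $d\ge6$ and $j=1$. Then $|Q_1(i)|>|Q_1(i+1)|$ for all $1\le i\le d-1$. Moreover, for every $1\le i\le d$, $Q_1(i)$ has the same sign as $T_{h_{\max}}(i,1)$, where $h_{\max}=\min\{1,d-i\}$.
   Context: Let $b=-q$. For integers $m\ge0$ and $l$, ${m\brack l}_b=\prod_{t=1}^{l}\frac{b^{m-t+1}-1}{b^t-1}$ for $l\ge0$ and $0$ for $l<0$. For $0\le i,j\le d$, $$Q_j(i)=\sum_{h=0}^{\min\{j,d-i\}}(-1)^j(-q)^{\binom{j-h}{2}+hd}{d-h\brack d-j}_b{d-i\brack h}_b,$$ the eigenvalues of the Hermitian forms graph $Q_q(d,j)$ (vertices: $d\times d$ Hermitian matrices over $\mathbb F_{q^2}$, adjacent iff their difference has rank $j$). $T_h(i,j)$ denotes the $h$-th summand (including the factor $(-1)^j$), for $0\le h\le\min\{j,d-i\}$. *)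

theory Defs
  imports Complex_Main "HOL-Computational_Algebra.Primes"
begin

definition prime_power :: "nat \<Rightarrow> bool" where
  "prime_power q \<longleftrightarrow> (\<exists>p k. prime p \<and> k \<ge> 1 \<and> q = p ^ k)"

text \<open>Gaussian binomial with base b: product over t = 1..l of (b^(m-t+1)-1)/(b^t-1) for l >= 0,
  and 0 for l < 0. The exponent m+1-t (natural subtraction) equals m-t+1 for t <= m+1;
  for larger t a factor with exponent 0 (t = m+1) already makes the product 0.\<close>
definition gbin :: "real \<Rightarrow> nat \<Rightarrow> int \<Rightarrow> real" where
  "gbin b m l = (if l < 0 then 0
     else (\<Prod>t\<in>{1..nat l}. (b ^ (m + 1 - t) - 1) / (b ^ t - 1)))"

definition Tsum :: "nat \<Rightarrow> nat \<Rightarrow> nat \<Rightarrow> nat \<Rightarrow> nat \<Rightarrow> real" where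
  "Tsum q d h i j = (-1) ^ j * (- real q) ^ (((j - h) choose 2) + h * d)
      * gbin (- real q) (d - h) (int (d - j)) * gbin (- real q) (d - i) (int h)"

definition Qeig :: "nat \<Rightarrow> nat \<Rightarrow> nat \<Rightarrow> nat \<Rightarrow> real" where
  "Qeig q d j i = (\<Sum>h = 0..min j (d - i). Tsum q d h i j)"

end

theory Submission
  imports Defs
begin

text \<open>For \<open>j = 1\<close> only the summands \<open>h = 0, 1\<close> occur and their Gaussian binomials collapse
  (\<open>[d, d-1] = (b^d - 1)/(b - 1)\<close>, \<open>[d-1, d-1] = 1\<close>), so with \<open>b = -q\<close> one gets the closed form
  \<open>Q_1(i) = (b^(2d-i) - 1)/(q + 1)\<close>. Since \<open>|b| \<ge> 2\<close>, the term \<open>b^(2d-i)\<close> dominates: it makes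
  \<open>|Q_1(i)|\<close> strictly decreasing in \<open>i\<close> and gives \<open>Q_1(i)\<close> the sign of \<open>b^(2d-i) = b^d b^(d-i)\<close>,
  which is also the sign of \<open>T_1(i,1) = b^d (b^(d-i) - 1)/(q + 1)\<close>.\<close>

lemma power_minus_one_neq_zero:
  fixes b :: real
  assumes "\<bar>b\<bar> > 1" and "t \<ge> 1"
  shows "b ^ t - 1 \<noteq> 0"
  using assms power_eq_1_iff[of b t] by auto

lemma gbin_0: "gbin b m 0 = 1"
  by (simp add: gbin_def)

lemma gbin_1: "gbin b m 1 = (b ^ m - 1) / (b - 1)"
  by (simp add: gbin_def)

lemma gbin_shifted:
  fixes b :: real
  shows "gbin b (k + l) (int l) = (\<Prod>t\<in>{1..l}. b ^ (k + t) - 1) / (\<Prod>t\<in>{1..l}. b ^ t - 1)"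
proof -
  have "(\<Prod>t\<in>{1..l}. b ^ (k + l + 1 - t) - 1) = (\<Prod>t\<in>{1..l}. b ^ (k + l + 1 - (l + 1 - t)) - 1)"
    by (rule prod.atLeastAtMost_rev)
  also have "\<dots> = (\<Prod>t\<in>{1..l}. b ^ (k + t) - 1)"
    by (rule prod.cong) auto
  finally show ?thesis by (simp add: gbin_def prod_dividef)
qed

lemma gbin_diag:
  fixes b :: real
  assumes "\<bar>b\<bar> > 1"
  shows "gbin b l (int l) = 1"
  using gbin_shifted[of b 0 l] power_minus_one_neq_zero[OF assms]
  by (simp add: prod_zero_iff)

lemma gbin_pred:
  fixes b :: real
  assumes "\<bar>b\<bar> > 1"
  shows "gbin b (Suc l) (int l) = (b ^ Suc l - 1) / (b - 1)"
proof -
  have "(\<Prod>t\<in>{1..l}. b ^ Suc t - 1) * (b - 1) = (b - 1) * (\<Prod>t\<in>{Suc 1..Suc l}. b ^ t - 1)"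
    by (simp only: prod.shift_bounds_cl_Suc_ivl mult.commute)
  also have "\<dots> = (\<Prod>t\<in>{1..Suc l}. b ^ t - 1)"
    by (simp add: prod.atLeast_Suc_atMost)
  also have "\<dots> = (\<Prod>t\<in>{1..l}. b ^ t - 1) * (b ^ Suc l - 1)"
    by (simp add: prod.cl_ivl_Suc)
  finally have "(\<Prod>t\<in>{1..l}. b ^ Suc t - 1) * (b - 1) = (\<Prod>t\<in>{1..l}. b ^ t - 1) * (b ^ Suc l - 1)" .
  moreover have "(\<Prod>t\<in>{1..l}. b ^ t - 1) \<noteq> 0" "b - 1 \<noteq> 0"
    using power_minus_one_neq_zero[OF assms] power_minus_one_neq_zero[OF assms, of 1]
    by (auto simp: prod_zero_iff)
  ultimately show ?thesis
    using gbin_shifted[of b 1 l] by (simp add: frac_eq_eq)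
qed

lemma sgn_power_minus_one:
  fixes b :: real
  assumes "\<bar>b\<bar> > 1" and "m \<ge> 1"
  shows "sgn (b ^ m - 1) = sgn (b ^ m)"
proof -
  have "\<bar>b ^ m\<bar> > 1"
    using assms by (simp add: power_abs)
  then consider "b ^ m > 1" | "b ^ m < -1"
    by linarith
  then show ?thesis
  proof cases
    case 1
    then have "b ^ m - 1 > 0" and "b ^ m > 0"
      by linarith+
    then show ?thesis
      by (simp only: sgn_pos)
  next
    case 2
    then have "b ^ m - 1 < 0" and "b ^ m < 0"
      by linarith+
    then show ?thesis
      by (simp only: sgn_neg)
  qed
qed

lemma abs_power_minus_one_less:
  fixes b :: real
  assumes "\<bar>b\<bar> \<ge> 2" and "n \<ge> 2"
  shows "\<bar>b ^ n - 1\<bar> < \<bar>b ^ Suc n - 1\<bar>"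
proof -
  have "\<bar>b\<bar> ^ n \<ge> 2 ^ 2"
    using assms power_mono[of 2 "\<bar>b\<bar>" n] power_increasing[of 2 n "2::real"] by linarith
  then have "\<bar>b ^ n - 1\<bar> < 2 * \<bar>b\<bar> ^ n - 1"
    using abs_triangle_ineq4[of "b ^ n" 1] by (simp add: power_abs)
  also have "\<dots> \<le> \<bar>b\<bar> ^ Suc n - 1"
    using mult_right_mono[OF assms(1), of "\<bar>b\<bar> ^ n"] by simp
  also have "\<dots> \<le> \<bar>b ^ Suc n - 1\<bar>"
    using abs_triangle_ineq2[of "b ^ Suc n" 1] by (simp add: abs_mult power_abs)
  finally show ?thesis .
qed

lemma Qeig_1_eq_Tsum_0_plus_Tsum_1: "Qeig q d 1 i = Tsum q d 0 i 1 + Tsum q d 1 i 1"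
proof (cases "i < d")
  case True
  then show ?thesis by (simp add: Qeig_def atLeast0_atMost_Suc)
next
  case False
  \<comment> \<open>here \<open>T_1\<close> vanishes because its factor \<open>[d - i, 1] = [0, 1]\<close> is zero\<close>
  then show ?thesis by (simp add: Qeig_def Tsum_def gbin_1)
qed

lemma Tsum_0_1:
  assumes "q \<ge> 2" and "d \<ge> 1"
  shows "Tsum q d 0 i 1 = ((- real q) ^ d - 1) / (real q + 1)"
proof -
  have "gbin (- real q) d (int (d - 1)) = ((- real q) ^ d - 1) / (- real q - 1)"
    using gbin_pred[of "- real q" "d - 1"] assms by simp
  then show ?thesis
    by (simp add: Tsum_def gbin_0 binomial_eq_0 field_simps)
qed

lemma Tsum_1_1:
  assumes "q \<ge> 2"
  shows "Tsum q d 1 i 1 = (- real q) ^ d * ((- real q) ^ (d - i) - 1) / (real q + 1)"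
proof -
  have "gbin (- real q) (d - 1) (int (d - 1)) = 1"
    using gbin_diag[of "- real q"] assms by simp
  then show ?thesis
    by (simp add: Tsum_def gbin_1 binomial_eq_0 field_simps)
qed

lemma Qeig_1:
  assumes "q \<ge> 2" and "1 \<le> d" and "i \<le> d"
  shows "Qeig q d 1 i = ((- real q) ^ (2 * d - i) - 1) / (real q + 1)"
proof -
  have "(- real q) ^ d * (- real q) ^ (d - i) = (- real q) ^ (2 * d - i)"
    using assms(3) by (simp add: power_add[symmetric] mult_2)
  then show ?thesis
    unfolding Qeig_1_eq_Tsum_0_plus_Tsum_1 Tsum_0_1[OF assms(1,2)] Tsum_1_1[OF assms(1)]
    by (simp add: add_divide_distrib[symmetric] algebra_simps)
qed

lemma abs_Qeig_1_less:
  assumes "q \<ge> 2" and "2 \<le> d" and "i + 1 \<le> d"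
  shows "\<bar>Qeig q d 1 (i + 1)\<bar> < \<bar>Qeig q d 1 i\<bar>"
proof -
  have "1 \<le> d" and "i \<le> d" and "2 \<le> 2 * d - (i + 1)" and "2 * d - i = Suc (2 * d - (i + 1))"
    using assms(2,3) by arith+
  then have "\<bar>(- real q) ^ (2 * d - (i + 1)) - 1\<bar> < \<bar>(- real q) ^ (2 * d - i) - 1\<bar>"
    using abs_power_minus_one_less[of "- real q"] assms(1) by simp
  then show ?thesis
    unfolding Qeig_1[OF assms(1) \<open>1 \<le> d\<close> \<open>i \<le> d\<close>] Qeig_1[OF assms(1) \<open>1 \<le> d\<close> assms(3)]
    by (simp add: divide_strict_right_mono)
qed

lemma sgn_Qeig_1:
  assumes "q \<ge> 2" and "i < d"
  shows "sgn (Qeig q d 1 i) = sgn (Tsum q d 1 i 1)"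
proof -
  define b where "b = - real q"
  have b: "\<bar>b\<bar> > 1"
    using assms(1) by (simp add: b_def)
  have "1 \<le> d" and "i \<le> d" and "d - i \<ge> 1" and "2 * d - i \<ge> 1" and "2 * d - i = d + (d - i)"
    using assms(2) by auto
  have "sgn (Qeig q d 1 i) = sgn (b ^ (2 * d - i))"
    unfolding Qeig_1[OF assms(1) \<open>1 \<le> d\<close> \<open>i \<le> d\<close>] b_def[symmetric] sgn_divide
      sgn_power_minus_one[OF b \<open>2 * d - i \<ge> 1\<close>]
    by simp
  also have "\<dots> = sgn (b ^ d) * sgn (b ^ (d - i) - 1) / sgn (real q + 1)"
    unfolding sgn_power_minus_one[OF b \<open>d - i \<ge> 1\<close>] \<open>2 * d - i = d + (d - i)\<close>
    by (simp add: power_add sgn_mult)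
  also have "\<dots> = sgn (Tsum q d 1 i 1)"
    unfolding Tsum_1_1[OF assms(1)] b_def by (simp add: sgn_mult sgn_divide)
  finally show ?thesis .
qed

theorem lemma5p1:
  fixes q d :: nat
  assumes "prime_power q" and "q \<ge> 2" and "d \<ge> 6"
  shows "(\<forall>i. 1 \<le> i \<and> i \<le> d - 1 \<longrightarrow> \<bar>Qeig q d 1 i\<bar> > \<bar>Qeig q d 1 (i + 1)\<bar>)
       \<and> (\<forall>i. 1 \<le> i \<and> i \<le> d \<longrightarrow> sgn (Qeig q d 1 i) = sgn (Tsum q d (min 1 (d - i)) i 1))"
proof (intro conjI allI impI)
  fix i
  assume "1 \<le> i \<and> i \<le> d - 1"
  then have "2 \<le> d" and "i + 1 \<le> d"
    using assms(3) by linarith+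
  then show "\<bar>Qeig q d 1 i\<bar> > \<bar>Qeig q d 1 (i + 1)\<bar>"
    by (rule abs_Qeig_1_less[OF assms(2)])
next
  fix i
  assume "1 \<le> i \<and> i \<le> d"
  then consider "i = d" | "i < d"
    by linarith
  then show "sgn (Qeig q d 1 i) = sgn (Tsum q d (min 1 (d - i)) i 1)"
  proof cases
    case 1
    then show ?thesis by (simp add: Qeig_def)
  next
    case 2
    then show ?thesis using sgn_Qeig_1[OF assms(2)] by simp
  qed
qed

end
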